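(* Consider the switched system described in the context. For any $(\mathbf{x}_0,j_0)\in\mathbb{R}^3_+\times\mathcal{S}$ there exists a unique solution $(\mathbf{X}(t),\xi(t))_{t\ge0}$ of $\frac{dX_i}{dt}(t)=X_i(t)f_i(\mathbf{X}(t),\xi(t))$, $i=1,2,3$, with $(\mathbf{X}(0),\xi(0))=(\mathbf{x}_0,j_0)$ (defined for all $t\ge0$). There exists a compact set $\mathcal{K}\subset\mathbb{R}^3_+$ such that every nonnegative solution eventually enters $\mathcal{K}$ and then remains there forever. Moreover, if $\mathbf{X}(0)=\mathbf{x}_0\in\mathbb{R}^{3,\circ}_+=(0,\infty)^3$, then with probability one $\mathbf{X}(t)\in\mathbb{R}^{3,\circ}_+$ for all $t\ge0$.
   Context: Let $r,d,b_1,b_2>0$ and, for $j\in\mathcal{S}=\{1,2\}$, let $c_1(j),c_2(j),e_1(j),e_2(j)>0$. Let $\xi(t)$ be a continuous-time Markov chain on $\mathcal{S}$ switching from $1$ to $2$ at rate $q_{12}>0$ and from $2$ to $1$ at rate $q_{21}>0$. For $\mathbf{x}=(x_1,x_2,x_3)$, $j\in\mathcal{S}$ put $f_1(\mathbf{x},j)=r-x_1-b_1x_2-c_1(j)x_3$, $f_2(\mathbf{x},j)=r-x_2-b_2x_1-c_2(j)x_3$, $f_3(\mathbf{x},j)=e_1(j)x_1+e_2(j)x_2-d$. *)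

theory Defs
  imports "HOL-Analysis.Analysis"
begin

definition Sset :: "nat set" where "Sset = {1, 2}"

definition orthant :: "(real^3) set" where
  "orthant = {x. \<forall>i. 0 \<le> x $ i}"

definition orthant_int :: "(real^3) set" where
  "orthant_int = {x. \<forall>i. 0 < x $ i}"

definition f1 :: "real \<Rightarrow> real \<Rightarrow> (nat \<Rightarrow> real) \<Rightarrow> real^3 \<Rightarrow> nat \<Rightarrow> real" where
  "f1 r b1 c1 x j = r - x$1 - b1 * x$2 - c1 j * x$3"

definition f2 :: "real \<Rightarrow> real \<Rightarrow> (nat \<Rightarrow> real) \<Rightarrow> real^3 \<Rightarrow> nat \<Rightarrow> real" where
  "f2 r b2 c2 x j = r - x$2 - b2 * x$1 - c2 j * x$3"

definition f3 :: "real \<Rightarrow> (nat \<Rightarrow> real) \<Rightarrow> (nat \<Rightarrow> real) \<Rightarrow> real^3 \<Rightarrow> nat \<Rightarrow> real" where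
  "f3 d e1 e2 x j = e1 j * x$1 + e2 j * x$2 - d"

definition field :: "real \<Rightarrow> real \<Rightarrow> real \<Rightarrow> real \<Rightarrow> (nat \<Rightarrow> real) \<Rightarrow> (nat \<Rightarrow> real)
    \<Rightarrow> (nat \<Rightarrow> real) \<Rightarrow> (nat \<Rightarrow> real) \<Rightarrow> nat \<Rightarrow> real^3 \<Rightarrow> real^3" where
  "field r d b1 b2 c1 c2 e1 e2 j x =
     vector [x$1 * f1 r b1 c1 x j, x$2 * f2 r b2 c2 x j, x$3 * f3 d e1 e2 x j]"

text \<open>Admissible sample path of the switching process xi on [0,oo): values in S,
  piecewise constant and right-continuous with finitely many jumps in every
  bounded interval (every jump time of [0,T) lies in a finite set D; the value at a
  jump time is the new value). Almost every path of the continuous-time Markov chain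
  on S with finite rates q12, q21 is of this form.\<close>
definition switching_path :: "(real \<Rightarrow> nat) \<Rightarrow> bool" where
  "switching_path \<sigma> \<longleftrightarrow> (\<forall>t. \<sigma> t \<in> Sset) \<and>
     (\<forall>T. \<exists>D. finite D \<and>
        (\<forall>s t. 0 \<le> s \<and> s \<le> t \<and> t < T \<and> {s<..t} \<inter> D = {} \<longrightarrow> \<sigma> s = \<sigma> t))"

text \<open>X solves dX_i/dt = X_i f_i(X, xi(t)) on [0,oo) along the path sigma:
  X is continuous on [0,oo) and has right derivative equal to the vector field
  at every t >= 0 (the path is right-continuous, so this is the usual notion).\<close>
definition solves :: "real \<Rightarrow> real \<Rightarrow> real \<Rightarrow> real \<Rightarrow> (nat \<Rightarrow> real) \<Rightarrow> (nat \<Rightarrow> real)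
    \<Rightarrow> (nat \<Rightarrow> real) \<Rightarrow> (nat \<Rightarrow> real) \<Rightarrow> (real \<Rightarrow> nat) \<Rightarrow> (real \<Rightarrow> real^3) \<Rightarrow> bool" where
  "solves r d b1 b2 c1 c2 e1 e2 \<sigma> X \<longleftrightarrow>
     continuous_on {0..} X \<and>
     (\<forall>t\<ge>0. (X has_vector_derivative field r d b1 b2 c1 c2 e1 e2 (\<sigma> t) (X t)) (at t within {t..}))"

end

theory Submission
  imports Defs
begin

text \<open>
  Along a switching path the system is an ODE whose field is piecewise constant in time and
  locally Lipschitz in the state. Every component satisfies \<open>x\<^sub>i' = x\<^sub>i g\<^sub>i\<close> with \<open>g\<^sub>i\<close>
  bounded on bounded time intervals, so Gronwall's inequality for \<open>\<plusminus>x\<^sub>i\<^sup>2\<close> shows that zero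
  components stay zero and positive ones stay positive: the closed and the open orthant are
  invariant. On the orthant, \<open>V = w\<^sub>1 x\<^sub>1 + w\<^sub>2 x\<^sub>2 + x\<^sub>3\<close> with \<open>w\<^sub>i c\<^sub>i(j) \<ge> e\<^sub>i(j)\<close> in both
  regimes satisfies \<open>V' \<le> d (A - V)\<close>, hence \<open>V(X t) - A \<le> (V(X 0) - A) e\<^sup>-\<^sup>d\<^sup>t\<close>.
  This a priori bound makes the solution of the field truncated outside a large ball, which
  exists by Banach's fixed point theorem, a solution of the original system on every
  \<open>[0, T]\<close>; Gronwall's inequality gives uniqueness; and every solution enters the compact
  set \<open>{x \<ge> 0. V x \<le> A + 1}\<close> by time \<open>V(X 0) / d\<close> and stays there.
\<close>

lemma right_DERIV_nonpos_imp_decreasing: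
  fixes \<phi> \<phi>' :: "real \<Rightarrow> real"
  assumes ab: "a \<le> b" and cont: "continuous_on {a..b} \<phi>"
    and der: "\<And>t. a \<le> t \<Longrightarrow> t < b \<Longrightarrow> (\<phi> has_real_derivative \<phi>' t) (at_right t)"
    and nonpos: "\<And>t. a \<le> t \<Longrightarrow> t < b \<Longrightarrow> \<phi>' t \<le> 0"
  shows "\<phi> b \<le> \<phi> a"
proof (rule field_le_epsilon)
  fix \<epsilon> :: real assume "\<epsilon> > 0"
  define e where "e = \<epsilon> / (b - a + 1)"
  have "e > 0" using \<open>\<epsilon> > 0\<close> ab by (simp add: e_def)
  define S where "S = {t\<in>{a..b}. \<phi> t - e * (t - a) \<le> \<phi> a}"
  have "closed S" unfolding S_def
    by (intro continuous_on_closed_Collect_le continuous_intros cont)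
  moreover have "a \<in> S" using ab by (auto simp: S_def)
  moreover have bdd: "bdd_above S" by (auto simp: S_def bdd_above_def)
  ultimately have sS: "Sup S \<in> S" using closed_contains_Sup by blast
  \<comment> \<open>if \<open>Sup S < b\<close>, the right derivative \<open>< e\<close> at \<open>Sup S\<close> pushes \<open>S\<close> beyond its supremum\<close>
  have "Sup S = b"
  proof (rule ccontr)
    define s where "s = Sup S"
    assume "Sup S \<noteq> b"
    with sS have s: "a \<le> s" "s < b" by (auto simp: S_def s_def)
    have "((\<lambda>y. (\<phi> y - \<phi> s) / (y - s)) \<longlongrightarrow> \<phi>' s) (at_right s)"
      using der[OF s] by (simp add: has_field_derivative_iff)
    moreover have "\<phi>' s < e" using nonpos[OF s] \<open>e > 0\<close> by simp
    ultimately have "eventually (\<lambda>y. (\<phi> y - \<phi> s) / (y - s) < e) (at_right s)"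
      by (rule order_tendstoD(2))
    then obtain c where c: "c > s" "\<And>y. s < y \<Longrightarrow> y < c \<Longrightarrow> (\<phi> y - \<phi> s) / (y - s) < e"
      by (auto simp: eventually_at_right_field)
    define y where "y = (s + min c b) / 2"
    have y: "s < y" "y < c" "y \<le> b" using c s by (auto simp: y_def)
    have "\<phi> y - \<phi> s < e * (y - s)" using c(2)[OF y(1,2)] y(1) by (simp add: divide_less_eq)
    moreover have "\<phi> s - e * (s - a) \<le> \<phi> a" using sS by (auto simp: S_def s_def)
    ultimately have "y \<in> S" using y s by (auto simp: S_def algebra_simps)
    hence "y \<le> s" unfolding s_def using bdd by (rule cSup_upper)
    with y show False by simp
  qed
  hence "\<phi> b \<le> \<phi> a + e * (b - a)" using sS by (auto simp: S_def algebra_simps)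
  also have "e * (b - a) \<le> \<epsilon>" using \<open>\<epsilon> > 0\<close> ab by (simp add: e_def field_simps)
  finally show "\<phi> b \<le> \<phi> a + \<epsilon>" by simp
qed

lemma right_DERIV_gronwall:
  fixes \<phi> \<phi>' :: "real \<Rightarrow> real"
  assumes ab: "a \<le> b" and cont: "continuous_on {a..b} \<phi>"
    and der: "\<And>t. a \<le> t \<Longrightarrow> t < b \<Longrightarrow> (\<phi> has_real_derivative \<phi>' t) (at_right t)"
    and growth: "\<And>t. a \<le> t \<Longrightarrow> t < b \<Longrightarrow> \<phi>' t \<le> K * \<phi> t"
  shows "\<phi> b \<le> \<phi> a * exp (K * (b - a))"
proof -
  define \<psi> where "\<psi> t = \<phi> t * exp (- K * (t - a))" for t
  have "\<psi> b \<le> \<psi> a"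
  proof (rule right_DERIV_nonpos_imp_decreasing[OF ab])
    show "continuous_on {a..b} \<psi>" unfolding \<psi>_def by (intro continuous_intros cont)
  next
    fix t assume t: "a \<le> t" "t < b"
    show "(\<psi> has_real_derivative (\<phi>' t - K * \<phi> t) * exp (- K * (t - a))) (at_right t)"
      unfolding \<psi>_def by (rule derivative_eq_intros der[OF t] refl | simp add: algebra_simps)+
    show "(\<phi>' t - K * \<phi> t) * exp (- K * (t - a)) \<le> 0"
      using growth[OF t] by (simp add: mult_nonpos_nonneg)
  qed
  hence "\<phi> b * exp (- K * (b - a)) * exp (K * (b - a)) \<le> \<phi> a * exp (K * (b - a))"
    by (simp add: \<psi>_def)
  thus ?thesis by (simp add: mult.assoc flip: exp_add)
qed

lemma rate_equation_square_bounds: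
  fixes x g :: "real \<Rightarrow> real"
  assumes cont: "continuous_on {0..T} x"
    and der: "\<And>t. 0 \<le> t \<Longrightarrow> t < T \<Longrightarrow> (x has_real_derivative x t * g t) (at_right t)"
    and bnd: "\<And>t. 0 \<le> t \<Longrightarrow> t < T \<Longrightarrow> \<bar>g t\<bar> \<le> M"
    and t: "0 \<le> t" "t \<le> T"
  shows "x t * x t \<le> x 0 * x 0 * exp (2 * M * t)"
    and "x 0 * x 0 * exp (- 2 * M * t) \<le> x t * x t"
proof -
  have sq: "((\<lambda>s. x s * x s) has_real_derivative 2 * g s * (x s * x s)) (at_right s)"
    if "0 \<le> s" "s < T" for s
    by (rule derivative_eq_intros der[OF that] refl | simp add: algebra_simps)+
  have cont_t: "continuous_on {0..t} (\<lambda>s. x s * x s)"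
    using continuous_on_subset[OF cont, of "{0..t}"] t by (auto intro!: continuous_intros)
  have "x t * x t \<le> x 0 * x 0 * exp (2 * M * (t - 0))"
  proof (rule right_DERIV_gronwall[OF t(1) cont_t])
    fix u assume u: "0 \<le> u" "u < t"
    show "((\<lambda>s. x s * x s) has_real_derivative 2 * g u * (x u * x u)) (at_right u)"
      using sq u t by simp
    show "2 * g u * (x u * x u) \<le> 2 * M * (x u * x u)"
      using bnd[of u] u t by (intro mult_right_mono) auto
  qed
  thus "x t * x t \<le> x 0 * x 0 * exp (2 * M * t)" by simp
  have "- (x t * x t) \<le> - (x 0 * x 0) * exp (- 2 * M * (t - 0))"
  proof (rule right_DERIV_gronwall[OF t(1)])
    show "continuous_on {0..t} (\<lambda>s. - (x s * x s))" using cont_t by (rule continuous_on_minus)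
    fix u assume u: "0 \<le> u" "u < t"
    show "((\<lambda>s. - (x s * x s)) has_real_derivative - (2 * g u * (x u * x u))) (at_right u)"
      using DERIV_minus[OF sq] u t by simp
    have "- g u * (x u * x u) \<le> M * (x u * x u)"
      using bnd[of u] u t by (intro mult_right_mono) auto
    thus "- (2 * g u * (x u * x u)) \<le> - 2 * M * - (x u * x u)" by simp
  qed
  thus "x 0 * x 0 * exp (- 2 * M * t) \<le> x t * x t" by simp
qed

lemma rate_equation_sign:
  fixes x g :: "real \<Rightarrow> real"
  assumes cont: "continuous_on {0..T} x"
    and der: "\<And>t. 0 \<le> t \<Longrightarrow> t < T \<Longrightarrow> (x has_real_derivative x t * g t) (at_right t)"
    and bnd: "\<And>t. 0 \<le> t \<Longrightarrow> t < T \<Longrightarrow> \<bar>g t\<bar> \<le> M"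
    and t: "0 \<le> t" "t \<le> T"
  shows rate_equation_zero: "x 0 = 0 \<Longrightarrow> x t = 0"
    and rate_equation_pos: "x 0 > 0 \<Longrightarrow> x t > 0"
proof -
  have upper: "x s * x s \<le> x 0 * x 0 * exp (2 * M * s)"
    and lower: "x 0 * x 0 * exp (- 2 * M * s) \<le> x s * x s" if "0 \<le> s" "s \<le> T" for s
    using rate_equation_square_bounds[of T x g M s] cont der bnd that by blast+
  have zero_iff: "x s = 0 \<longleftrightarrow> x 0 = 0" if "0 \<le> s" "s \<le> T" for s
  proof
    assume "x 0 = 0"
    hence "x s * x s \<le> 0" using upper[OF that] by simp
    thus "x s = 0" by (metis antisym mult_eq_0_iff zero_le_square)
  next
    assume "x s = 0"
    hence "x 0 * x 0 * exp (- 2 * M * s) \<le> 0" using lower[OF that] by simp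
    hence "x 0 * x 0 \<le> 0" by (simp add: mult_le_0_iff)
    thus "x 0 = 0" by (metis antisym mult_eq_0_iff zero_le_square)
  qed
  show "x 0 = 0 \<Longrightarrow> x t = 0" using zero_iff[OF t] by blast
  show "x t > 0" if "x 0 > 0"
  proof (rule ccontr)
    assume "\<not> x t > 0"
    then obtain s where "0 \<le> s" "s \<le> t" "x s = 0"
      using IVT2'[of x t 0 0] \<open>x 0 > 0\<close> t continuous_on_subset[OF cont, of "{0..t}"] by auto
    with zero_iff[of s] t \<open>x 0 > 0\<close> show False by auto
  qed
qed

definition solution_on :: "('j \<Rightarrow> 'a::real_normed_vector \<Rightarrow> 'a) \<Rightarrow> (real \<Rightarrow> 'j) \<Rightarrow> (real \<Rightarrow> 'a) \<Rightarrow> real \<Rightarrow> bool"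
  where "solution_on G \<sigma> X T \<longleftrightarrow> continuous_on {0..T} X \<and>
    (\<forall>t. 0 \<le> t \<and> t < T \<longrightarrow> (X has_vector_derivative G (\<sigma> t) (X t)) (at_right t))"

lemma solution_on_mono: "solution_on G \<sigma> X T \<Longrightarrow> S \<le> T \<Longrightarrow> solution_on G \<sigma> X S"
  unfolding solution_on_def by (auto intro: continuous_on_subset)

lemma continuous_on_Icc_bound:
  fixes X :: "real \<Rightarrow> 'a::real_normed_vector"
  assumes "continuous_on {a..b} X"
  shows "\<exists>B\<ge>0. \<forall>t\<in>{a..b}. norm (X t) \<le> B"
proof -
  have "bounded (X ` {a..b})" by (rule compact_imp_bounded[OF compact_continuous_image[OF assms compact_Icc]])
  then obtain B where "\<forall>t\<in>{a..b}. norm (X t) \<le> B" unfolding bounded_iff by blast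
  thus ?thesis by (intro exI[of _ "max B 0"]) (auto intro: le_max_iff_disj[THEN iffD2])
qed

lemma solution_on_unique:
  fixes G :: "'j \<Rightarrow> 'a::real_inner \<Rightarrow> 'a"
  assumes X: "solution_on G \<sigma> X T" and Y: "solution_on G \<sigma> Y T" and XY0: "X 0 = Y 0"
    and lip: "\<And>B. 0 \<le> B \<Longrightarrow> \<exists>L. \<forall>t. L-lipschitz_on (cball 0 B) (G (\<sigma> t))"
    and t: "0 \<le> t" "t \<le> T"
  shows "X t = Y t"
proof -
  obtain BX where "BX \<ge> 0" and BX: "\<forall>s\<in>{0..T}. norm (X s) \<le> BX"
    using continuous_on_Icc_bound X unfolding solution_on_def by blast
  obtain BY where "BY \<ge> 0" and BY: "\<forall>s\<in>{0..T}. norm (Y s) \<le> BY"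
    using continuous_on_Icc_bound Y unfolding solution_on_def by blast
  obtain L where L: "\<And>s. L-lipschitz_on (cball 0 (BX + BY)) (G (\<sigma> s))"
    using lip[of "BX + BY"] \<open>BX \<ge> 0\<close> \<open>BY \<ge> 0\<close> by auto
  define Z where "Z s = X s - Y s" for s
  define Z' where "Z' s = G (\<sigma> s) (X s) - G (\<sigma> s) (Y s)" for s
  have "inner (Z t) (Z t) \<le> inner (Z 0) (Z 0) * exp (2 * L * (t - 0))"
  proof (rule right_DERIV_gronwall[where \<phi> = "\<lambda>s. inner (Z s) (Z s)", OF t(1)])
    have "continuous_on {0..t} X" "continuous_on {0..t} Y"
      using X Y t unfolding solution_on_def by (auto intro: continuous_on_subset)
    thus "continuous_on {0..t} (\<lambda>s. inner (Z s) (Z s))" unfolding Z_def by (intro continuous_intros)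
  next
    fix s assume s: "0 \<le> s" "s < t"
    have "(Z has_vector_derivative Z' s) (at_right s)"
      unfolding Z_def Z'_def using X Y s t unfolding solution_on_def by (intro derivative_intros) auto
    from bounded_bilinear.has_vector_derivative[OF bounded_bilinear_inner this this]
    show "((\<lambda>s. inner (Z s) (Z s)) has_real_derivative 2 * inner (Z s) (Z' s)) (at_right s)"
      by (simp add: has_real_derivative_iff_has_vector_derivative inner_commute)
    have "norm (X s) \<le> BX" "norm (Y s) \<le> BY" using BX BY s t by simp_all
    hence "norm (Z' s) \<le> L * norm (Z s)"
      unfolding Z_def Z'_def using \<open>BX \<ge> 0\<close> \<open>BY \<ge> 0\<close> by (intro lipschitz_on_normD[OF L]) auto
    hence "norm (Z s) * norm (Z' s) \<le> norm (Z s) * (L * norm (Z s))" by (rule mult_left_mono) simp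
    hence "inner (Z s) (Z' s) \<le> L * inner (Z s) (Z s)"
      using norm_cauchy_schwarz[of "Z s" "Z' s"] by (simp add: dot_square_norm power2_eq_square ac_simps)
    thus "2 * inner (Z s) (Z' s) \<le> 2 * L * inner (Z s) (Z s)" by simp
  qed
  hence "inner (Z t) (Z t) \<le> 0" using XY0 by (simp add: Z_def)
  thus ?thesis by (simp add: Z_def inner_gt_zero_iff[symmetric] not_less[symmetric])
qed

lemma switching_path_locally_constant:
  assumes sw: "switching_path \<sigma>" and t: "0 \<le> t"
  obtains \<delta> where "\<delta> > 0"
    "\<And>u. t \<le> u \<Longrightarrow> u < t + \<delta> \<Longrightarrow> \<sigma> u = \<sigma> t"
    "\<And>u w. 0 \<le> u \<Longrightarrow> t - \<delta> < u \<Longrightarrow> u \<le> w \<Longrightarrow> w < t \<Longrightarrow> \<sigma> w = \<sigma> u"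
proof -
  obtain D where "finite D"
    and D: "\<And>s u. 0 \<le> s \<Longrightarrow> s \<le> u \<Longrightarrow> u < t + 1 \<Longrightarrow> {s<..u} \<inter> D = {} \<Longrightarrow> \<sigma> s = \<sigma> u"
    using sw unfolding switching_path_def by meson
  obtain \<delta> where "\<delta> > 0" and \<delta>: "\<And>y. y \<in> D \<Longrightarrow> y \<noteq> t \<Longrightarrow> \<delta> \<le> \<bar>t - y\<bar>"
    using finite_set_avoid[OF \<open>finite D\<close>, of t] by (auto simp: dist_real_def)
  show ?thesis
  proof (rule that[of "min \<delta> 1"])
    show "min \<delta> 1 > 0" using \<open>\<delta> > 0\<close> by simp
  next
    fix u assume u: "t \<le> u" "u < t + min \<delta> 1"
    have "{t<..u} \<inter> D = {}" using \<delta> u by force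
    thus "\<sigma> u = \<sigma> t" using D[of t u] t u by simp
  next
    fix u w assume uw: "0 \<le> u" "t - min \<delta> 1 < u" "u \<le> w" "w < t"
    have "{u<..w} \<inter> D = {}" using \<delta> uw by force
    thus "\<sigma> w = \<sigma> u" using D[of u w] uw by simp
  qed
qed

lemma switching_path_integrable:
  fixes \<phi> :: "nat \<Rightarrow> real \<Rightarrow> 'a::banach"
  assumes sw: "switching_path \<sigma>" and "0 \<le> a"
    and cont: "\<And>j. j \<in> Sset \<Longrightarrow> continuous_on {a..b} (\<phi> j)"
  shows "(\<lambda>u. \<phi> (\<sigma> u) u) integrable_on {a..b}"
proof -
  have Sv: "\<sigma> t \<in> Sset" for t using sw by (simp add: switching_path_def)
  have "(\<lambda>u. \<phi> (\<sigma> u) u) integrable_on cbox a b"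
  proof (rule integrable_on_little_subintervals, intro ballI)
    fix x assume x: "x \<in> cbox a b"
    obtain \<delta> where "\<delta> > 0"
      and right: "\<And>u. x \<le> u \<Longrightarrow> u < x + \<delta> \<Longrightarrow> \<sigma> u = \<sigma> x"
      and left: "\<And>u w. 0 \<le> u \<Longrightarrow> x - \<delta> < u \<Longrightarrow> u \<le> w \<Longrightarrow> w < x \<Longrightarrow> \<sigma> w = \<sigma> u"
      using switching_path_locally_constant[OF sw, of x] x \<open>0 \<le> a\<close> by auto
    show "\<exists>d>0. \<forall>u v. x \<in> cbox u v \<and> cbox u v \<subseteq> ball x d \<and> cbox u v \<subseteq> cbox a b \<longrightarrow>
        (\<lambda>u. \<phi> (\<sigma> u) u) integrable_on cbox u v"
    proof (intro exI[of _ \<delta>] conjI allI impI)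
      fix u v assume uv: "x \<in> cbox u v \<and> cbox u v \<subseteq> ball x \<delta> \<and> cbox u v \<subseteq> cbox a b"
      hence ux: "u \<le> x" "x \<le> v" by (simp_all add: cbox_interval)
      hence "u \<in> cbox u v" "v \<in> cbox u v" by (simp_all add: cbox_interval)
      hence "u \<in> ball x \<delta>" "v \<in> ball x \<delta>" "u \<in> cbox a b" "v \<in> cbox a b" using uv by blast+
      hence "dist x u < \<delta>" "dist x v < \<delta>" by simp_all
      with ux have uxv: "u \<le> x" "x \<le> v" "x - \<delta> < u" "v < x + \<delta>"
        by (simp_all add: dist_real_def)
      have ab: "a \<le> u" "v \<le> b" using \<open>u \<in> cbox a b\<close> \<open>v \<in> cbox a b\<close> by simp_all
      have "\<phi> (\<sigma> u) integrable_on {u..x}"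
        using ab uxv by (intro integrable_continuous_interval continuous_on_subset[OF cont[OF Sv]]) auto
      hence left_part: "(\<lambda>w. \<phi> (\<sigma> w) w) integrable_on {u..x}"
      proof (rule integrable_spike_finite[of "{x}", rotated 2])
        show "\<phi> (\<sigma> w) w = \<phi> (\<sigma> u) w" if "w \<in> {u..x} - {x}" for w
          using left[of u w] that uxv ab \<open>0 \<le> a\<close> by simp
      qed simp
      have "\<phi> (\<sigma> x) integrable_on {x..v}"
        using ab uxv by (intro integrable_continuous_interval continuous_on_subset[OF cont[OF Sv]]) auto
      moreover have "\<phi> (\<sigma> w) w = \<phi> (\<sigma> x) w" if "w \<in> {x..v}" for w
        using right[of w] that uxv by simp
      ultimately have right_part: "(\<lambda>w. \<phi> (\<sigma> w) w) integrable_on {x..v}"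
        using Henstock_Kurzweil_Integration.integrable_cong[of "{x..v}" "\<lambda>w. \<phi> (\<sigma> w) w"] by simp
      show "(\<lambda>u. \<phi> (\<sigma> u) u) integrable_on cbox u v"
        using Henstock_Kurzweil_Integration.integrable_combine[OF uxv(1,2) left_part right_part] by simp
    qed (use \<open>\<delta> > 0\<close> in simp)
  qed
  thus ?thesis by simp
qed

lemma switching_path_integrable_comp:
  fixes G :: "nat \<Rightarrow> 'a::banach \<Rightarrow> 'a"
  assumes sw: "switching_path \<sigma>" and contG: "\<And>j. j \<in> Sset \<Longrightarrow> continuous_on UNIV (G j)"
    and contX: "continuous_on {0..s} X"
  shows "(\<lambda>u. G (\<sigma> u) (X u)) integrable_on {0..s}"
proof (rule switching_path_integrable[OF sw order_refl])
  show "continuous_on {0..s} (\<lambda>u. G j (X u))" if "j \<in> Sset" for j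
    by (rule continuous_on_compose2[OF contG[OF that] contX]) simp
qed

lemma solution_on_of_integral_equation:
  fixes G :: "nat \<Rightarrow> 'a::banach \<Rightarrow> 'a"
  assumes sw: "switching_path \<sigma>" and contG: "\<And>j. j \<in> Sset \<Longrightarrow> continuous_on UNIV (G j)"
    and contX: "continuous_on {0..T} X"
    and eq: "\<And>s. 0 \<le> s \<Longrightarrow> s \<le> T \<Longrightarrow> X s = X 0 + integral {0..s} (\<lambda>u. G (\<sigma> u) (X u))"
  shows "solution_on G \<sigma> X T"
proof -
  have Sv: "\<sigma> t \<in> Sset" for t using sw by (simp add: switching_path_def)
  have "(X has_vector_derivative G (\<sigma> t) (X t)) (at_right t)" if t: "0 \<le> t" "t < T" for t
  proof -
    obtain \<delta> where "\<delta> > 0" and const: "\<And>u. t \<le> u \<Longrightarrow> u < t + \<delta> \<Longrightarrow> \<sigma> u = \<sigma> t"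
      using switching_path_locally_constant[OF sw t(1)] by metis
    define b where "b = min T (t + \<delta> / 2)"
    have b: "t < b" "b \<le> T" using t \<open>\<delta> > 0\<close> by (auto simp: b_def)
    define Y where "Y u = X t + integral {t..u} (\<lambda>u. G (\<sigma> t) (X u))" for u
    have "continuous_on {t..b} (\<lambda>u. G (\<sigma> t) (X u))"
      by (rule continuous_on_compose2[OF contG[OF Sv] continuous_on_subset[OF contX]]) (use t b in auto)
    from integral_has_vector_derivative[OF this, of t] b
    have Y_deriv: "(Y has_vector_derivative G (\<sigma> t) (X t)) (at t within {t..b})"
      unfolding Y_def using has_vector_derivative_add[OF has_vector_derivative_const] by fastforce
    have Y_eq: "Y s = X s" if s: "s \<in> {t..b}" for s
    proof -
      have "continuous_on {0..s} X" using contX s b by (auto intro: continuous_on_subset)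
      hence "(\<lambda>u. G (\<sigma> u) (X u)) integrable_on {0..s}"
        using contG by (intro switching_path_integrable_comp[OF sw])
      hence "integral {0..s} (\<lambda>u. G (\<sigma> u) (X u))
          = integral {0..t} (\<lambda>u. G (\<sigma> u) (X u)) + integral {t..s} (\<lambda>u. G (\<sigma> u) (X u))"
        using s t by (intro Henstock_Kurzweil_Integration.integral_combine[symmetric]) auto
      also have "integral {t..s} (\<lambda>u. G (\<sigma> u) (X u)) = integral {t..s} (\<lambda>u. G (\<sigma> t) (X u))"
      proof (rule Henstock_Kurzweil_Integration.integral_cong)
        fix v assume "v \<in> {t..s}"
        thus "G (\<sigma> v) (X v) = G (\<sigma> t) (X v)" using const[of v] s \<open>\<delta> > 0\<close> by (simp add: b_def)
      qed
      finally have "integral {0..s} (\<lambda>u. G (\<sigma> u) (X u))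
          = integral {0..t} (\<lambda>u. G (\<sigma> u) (X u)) + integral {t..s} (\<lambda>u. G (\<sigma> t) (X u))" .
      moreover have "X s = X 0 + integral {0..s} (\<lambda>u. G (\<sigma> u) (X u))" by (rule eq) (use s b t in auto)
      moreover have "X t = X 0 + integral {0..t} (\<lambda>u. G (\<sigma> u) (X u))" by (rule eq) (use t in auto)
      ultimately show ?thesis by (simp add: Y_def)
    qed
    have "(X has_vector_derivative G (\<sigma> t) (X t)) (at t within {t..b})"
      by (rule has_vector_derivative_transform_within[OF Y_deriv zero_less_one]) (use b Y_eq in auto)
    thus ?thesis using at_within_Icc_at_right[OF b(1)] by simp
  qed
  with contX show ?thesis by (simp add: solution_on_def)
qed

lemma norm_integral_exp_weighted_le:
  fixes f :: "real \<Rightarrow> 'a::banach"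
  assumes f: "f integrable_on {0..s}" and "0 \<le> s" "K > 0" "0 \<le> C"
    and bound: "\<And>u. u \<in> {0..s} \<Longrightarrow> norm (f u) \<le> C * exp (K * u)"
  shows "exp (- (K * s)) * norm (integral {0..s} f) \<le> C / K"
proof -
  have "((\<lambda>u. C * exp (K * u)) has_integral (C * exp (K * s) / K - C * exp (K * 0) / K)) {0..s}"
  proof (rule fundamental_theorem_of_calculus[OF \<open>0 \<le> s\<close>])
    fix x assume "x \<in> {0..s}"
    show "((\<lambda>u. C * exp (K * u) / K) has_vector_derivative C * exp (K * x)) (at x within {0..s})"
      unfolding has_real_derivative_iff_has_vector_derivative[symmetric]
      by (rule derivative_eq_intros refl | use \<open>K > 0\<close> in simp)+
  qed
  hence "norm (integral {0..s} f) \<le> C * exp (K * s) / K - C / K"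
    using integral_norm_bound_integral[OF f _ bound] by (simp add: has_integral_iff)
  hence "exp (- (K * s)) * norm (integral {0..s} f) \<le> exp (- (K * s)) * (C * exp (K * s) / K - C / K)"
    by (rule mult_left_mono) simp
  also have "\<dots> = C / K - exp (- (K * s)) * (C / K)"
    by (simp add: field_simps flip: exp_add)
  also have "\<dots> \<le> C / K" using \<open>K > 0\<close> \<open>0 \<le> C\<close> by simp
  finally show ?thesis .
qed

lemma integral_equation_exists_lipschitz:
  fixes G :: "nat \<Rightarrow> 'a::banach \<Rightarrow> 'a"
  assumes sw: "switching_path \<sigma>" and "0 \<le> T"
    and lip: "\<And>j. j \<in> Sset \<Longrightarrow> L-lipschitz_on UNIV (G j)"
  obtains X where "continuous_on {0..T} X"
    "\<And>s. 0 \<le> s \<Longrightarrow> s \<le> T \<Longrightarrow> X s = x0 + integral {0..s} (\<lambda>u. G (\<sigma> u) (X u))"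
proof -
  have Sv: "\<sigma> t \<in> Sset" for t using sw by (simp add: switching_path_def)
  have "L \<ge> 0" using lipschitz_on_nonneg[OF lip[OF Sv]] .
  have contG: "continuous_on UNIV (G j)" if "j \<in> Sset" for j
    using lipschitz_on_continuous_on[OF lip[OF that]] .
  define K where "K = 2 * L + 1"
  have "K > 0" "L / K < 1" using \<open>L \<ge> 0\<close> by (auto simp: K_def)
  \<comment> \<open>With \<open>X t = e\<^sup>K\<^sup>t Z t\<close>, the sup norm of \<open>Z\<close> is the weighted norm \<open>sup e\<^sup>-\<^sup>K\<^sup>t |X t|\<close>,
    in which the Picard map is an \<open>L/K\<close>-contraction.\<close>
  define h where "h Z u = G (\<sigma> u) (exp (K * u) *\<^sub>R apply_bcontfun Z u)" for Z :: "real \<Rightarrow>\<^sub>C 'a" and u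
  define P where "P Z s = exp (- (K * s)) *\<^sub>R (x0 + integral {0..s} (h Z))" for Z s
  have h_int: "h Z integrable_on {0..s}" for Z s
    unfolding h_def[abs_def] using contG
    by (intro switching_path_integrable_comp[OF sw]) (auto intro!: continuous_intros continuous_on_apply_bcontfun)
  have "continuous_on (cbox 0 T) (P Z)" for Z
    unfolding P_def cbox_interval by (intro continuous_intros indefinite_integral_continuous_1 h_int)
  hence "\<exists>\<Phi>Z. \<forall>t. apply_bcontfun \<Phi>Z t = P Z (clamp 0 T t)" for Z
    by (metis continuous_on_cbox_bcontfunE)
  then obtain \<Phi> where \<Phi>_apply: "\<And>Z t. apply_bcontfun (\<Phi> Z) t = P Z (clamp 0 T t)" by metis
  have clamp: "clamp 0 T t \<in> {0..T}" for t
    using clamp_in_interval[of 0 T t] \<open>0 \<le> T\<close> by (simp add: cbox_interval)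
  have contraction: "dist (\<Phi> Z1) (\<Phi> Z2) \<le> L / K * dist Z1 Z2" for Z1 Z2
  proof (rule dist_bound)
    fix t
    define s where "s = clamp 0 T t"
    have "0 \<le> s" using clamp by (simp add: s_def)
    have diff_bound: "norm (h Z1 u - h Z2 u) \<le> L * dist Z1 Z2 * exp (K * u)" for u
    proof -
      have "norm (h Z1 u - h Z2 u)
          \<le> L * norm (exp (K * u) *\<^sub>R apply_bcontfun Z1 u - exp (K * u) *\<^sub>R apply_bcontfun Z2 u)"
        unfolding h_def by (rule lipschitz_on_normD[OF lip[OF Sv]]) simp_all
      also have "\<dots> = L * exp (K * u) * dist (apply_bcontfun Z1 u) (apply_bcontfun Z2 u)"
        by (simp add: dist_norm flip: scaleR_diff_right)
      also have "\<dots> \<le> L * exp (K * u) * dist Z1 Z2"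
        using \<open>L \<ge> 0\<close> by (intro mult_left_mono dist_bounded) auto
      finally show ?thesis by (simp add: ac_simps)
    qed
    have "dist (\<Phi> Z1 t) (\<Phi> Z2 t) = exp (- (K * s)) * norm (integral {0..s} (\<lambda>u. h Z1 u - h Z2 u))"
      using h_int
      by (simp add: \<Phi>_apply P_def s_def dist_norm integral_diff flip: scaleR_diff_right)
    also have "\<dots> \<le> L * dist Z1 Z2 / K"
      using \<open>0 \<le> s\<close> \<open>K > 0\<close> \<open>L \<ge> 0\<close> diff_bound h_int
      by (intro norm_integral_exp_weighted_le integrable_diff) auto
    finally show "dist (\<Phi> Z1 t) (\<Phi> Z2 t) \<le> L / K * dist Z1 Z2" by simp
  qed
  obtain Z where Z: "\<Phi> Z = Z"
    using banach_fix_type[of "L / K" \<Phi>] contraction \<open>L \<ge> 0\<close> \<open>K > 0\<close> \<open>L / K < 1\<close> by auto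
  define X where "X t = exp (K * t) *\<^sub>R apply_bcontfun Z t" for t
  have "X s = x0 + integral {0..s} (\<lambda>u. G (\<sigma> u) (X u))" if "0 \<le> s" "s \<le> T" for s
  proof -
    have "clamp 0 T s = s" using that by (simp add: cbox_interval)
    hence "apply_bcontfun Z s = P Z s" by (metis Z \<Phi>_apply)
    thus ?thesis by (simp add: X_def P_def h_def[abs_def] flip: exp_add)
  qed
  moreover have "continuous_on {0..T} X"
    unfolding X_def by (intro continuous_intros continuous_on_apply_bcontfun)
  ultimately show ?thesis using that by blast
qed

lemma solution_on_exists_lipschitz:
  fixes G :: "nat \<Rightarrow> 'a::banach \<Rightarrow> 'a"
  assumes sw: "switching_path \<sigma>" and "0 \<le> T"
    and lip: "\<And>j. j \<in> Sset \<Longrightarrow> L-lipschitz_on UNIV (G j)"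
  obtains X where "solution_on G \<sigma> X T" "X 0 = x0"
proof -
  obtain X where contX: "continuous_on {0..T} X"
    and X_eq: "\<And>s. 0 \<le> s \<Longrightarrow> s \<le> T \<Longrightarrow> X s = x0 + integral {0..s} (\<lambda>u. G (\<sigma> u) (X u))"
    using integral_equation_exists_lipschitz[OF sw \<open>0 \<le> T\<close>] lip by blast
  have "X 0 = x0" using X_eq[of 0] \<open>0 \<le> T\<close> by simp
  moreover have "solution_on G \<sigma> X T"
  proof (rule solution_on_of_integral_equation[OF sw _ contX])
    show "continuous_on UNIV (G j)" if "j \<in> Sset" for j
      using lipschitz_on_continuous_on[OF lip[OF that]] .
    show "X s = X 0 + integral {0..s} (\<lambda>u. G (\<sigma> u) (X u))" if "0 \<le> s" "s \<le> T" for s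
      using X_eq[OF that] \<open>X 0 = x0\<close> by simp
  qed
  ultimately show ?thesis using that by blast
qed

lemma solution_on_cong:
  assumes X: "solution_on G \<sigma> X T" and eq: "\<And>t. 0 \<le> t \<Longrightarrow> t \<le> T \<Longrightarrow> Y t = X t"
  shows "solution_on G \<sigma> Y T"
  unfolding solution_on_def
proof (intro conjI allI impI)
  show "continuous_on {0..T} Y"
    using X eq unfolding solution_on_def by (metis atLeastAtMost_iff continuous_on_cong)
  fix t assume t: "0 \<le> t \<and> t < T"
  have "(X has_vector_derivative G (\<sigma> t) (Y t)) (at t within {t..T})"
    using X t eq[of t] at_within_Icc_at_right[of t T] unfolding solution_on_def by simp
  hence "(Y has_vector_derivative G (\<sigma> t) (Y t)) (at t within {t..T})"
    by (rule has_vector_derivative_transform_within[OF _ zero_less_one]) (use t eq in auto)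
  thus "(Y has_vector_derivative G (\<sigma> t) (Y t)) (at_right t)"
    using at_within_Icc_at_right[of t T] t by simp
qed

lemma solution_on_glue:
  assumes sols: "\<And>n::nat. solution_on G \<sigma> (Xs n) (real n)"
    and agree: "\<And>m n t. 0 \<le> t \<Longrightarrow> t \<le> real m \<Longrightarrow> t \<le> real n \<Longrightarrow> Xs m t = Xs n t"
  obtains X where "\<And>T. solution_on G \<sigma> X T" "\<And>n t. 0 \<le> t \<Longrightarrow> t \<le> real n \<Longrightarrow> X t = Xs n t"
proof
  define X where "X t = Xs (nat \<lceil>t\<rceil>) t" for t
  show X: "X t = Xs n t" if "0 \<le> t" "t \<le> real n" for n t
  proof -
    have "t \<le> real (nat \<lceil>t\<rceil>)" by linarith
    thus ?thesis using agree[of t "nat \<lceil>t\<rceil>" n] that by (simp add: X_def)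
  qed
  show "solution_on G \<sigma> X T" for T
  proof -
    obtain n :: nat where "T < real n" using reals_Archimedean2 by blast
    hence "solution_on G \<sigma> (Xs n) T" using solution_on_mono[OF sols] by simp
    thus ?thesis by (rule solution_on_cong) (use X \<open>T < real n\<close> in simp)
  qed
qed

lemma solution_on_all_iff:
  "(continuous_on {0..} X \<and> (\<forall>t\<ge>0. (X has_vector_derivative G (\<sigma> t) (X t)) (at t within {t..})))
    \<longleftrightarrow> (\<forall>T. solution_on G \<sigma> X T)"
  (is "?global \<longleftrightarrow> _")
proof
  assume ?global
  thus "\<forall>T. solution_on G \<sigma> X T"
    unfolding solution_on_def at_within_Ici_at_right by (auto intro: continuous_on_subset)
next
  assume sol: "\<forall>T. solution_on G \<sigma> X T"
  have "continuous (at t within {0..}) X" if "0 \<le> t" for t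
  proof -
    have "continuous (at t within {0..t + 1}) X"
      using sol that unfolding solution_on_def by (simp add: continuous_on_eq_continuous_within)
    moreover have "at t within {0..} = at t within {0..t + 1}"
      by (rule at_within_nhd[of t "{..<t + 1}"]) auto
    ultimately show ?thesis by simp
  qed
  moreover have "(X has_vector_derivative G (\<sigma> t) (X t)) (at t within {t..})" if "0 \<le> t" for t
    using sol[rule_format, of "t + 1"] that unfolding solution_on_def at_within_Ici_at_right by simp
  ultimately show ?global by (simp add: continuous_on_eq_continuous_within)
qed

lemma solution_on_of_stays_in:
  fixes F G :: "'j \<Rightarrow> 'a::real_normed_vector \<Rightarrow> 'a"
  assumes G: "solution_on G \<sigma> Y T" and "open U" and GF: "\<And>j x. x \<in> U \<Longrightarrow> G j x = F j x"
    and stays: "\<And>t. 0 \<le> t \<Longrightarrow> t \<le> T \<Longrightarrow> solution_on F \<sigma> Y t \<Longrightarrow> Y t \<in> U"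
  shows "solution_on F \<sigma> Y T"
proof -
  have F_upto: "solution_on F \<sigma> Y t" if "t \<le> T" and inU: "\<And>s. 0 \<le> s \<Longrightarrow> s < t \<Longrightarrow> Y s \<in> U" for t
    unfolding solution_on_def
  proof (intro conjI allI impI)
    show "continuous_on {0..t} Y" using G \<open>t \<le> T\<close> unfolding solution_on_def by (auto intro: continuous_on_subset)
    fix s assume s: "0 \<le> s \<and> s < t"
    have "(Y has_vector_derivative G (\<sigma> s) (Y s)) (at_right s)"
      using G s \<open>t \<le> T\<close> unfolding solution_on_def by simp
    thus "(Y has_vector_derivative F (\<sigma> s) (Y s)) (at_right s)" using GF[OF inU] s by simp
  qed
  define S where "S = {s \<in> {0..T}. Y s \<notin> U}"
  show ?thesis
  proof (cases "S = {}")
    case True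
    thus ?thesis by (intro F_upto) (auto simp: S_def)
  next
    case False
    \<comment> \<open>at the first exit time from \<open>U\<close>, \<open>Y\<close> is still an \<open>F\<close>-solution and so lies in \<open>U\<close>\<close>
    have "S = {0..T} \<inter> Y -` (- U)" by (auto simp: S_def)
    hence "closed S"
      using G \<open>open U\<close> by (simp add: continuous_closed_preimage solution_on_def closed_Compl)
    moreover have "bdd_below S" by (auto simp: S_def bdd_below_def)
    ultimately have "Inf S \<in> S" using closed_contains_Inf False by blast
    hence "Inf S \<le> T" "Y (Inf S) \<notin> U" by (auto simp: S_def)
    moreover have "Y s \<in> U" if "0 \<le> s" "s < Inf S" for s
    proof (rule ccontr)
      assume "Y s \<notin> U"
      hence "s \<in> S" using that \<open>Inf S \<le> T\<close> by (auto simp: S_def)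
      hence "Inf S \<le> s" using \<open>bdd_below S\<close> by (rule cInf_lower)
      with that show False by simp
    qed
    ultimately have "solution_on F \<sigma> Y (Inf S)" by (intro F_upto)
    hence "Y (Inf S) \<in> U" using \<open>Inf S \<in> S\<close> by (intro stays) (auto simp: S_def)
    with \<open>Y (Inf S) \<notin> U\<close> show ?thesis by simp
  qed
qed

lemma norm_vec_mult_le:
  fixes x y :: "real^'n"
  shows "norm (x * y) \<le> norm x * norm y"
proof -
  have "norm (x * y) \<le> norm (norm x *\<^sub>R y)"
    by (rule norm_le_componentwise_cart) (simp add: abs_mult mult_right_mono component_le_norm_cart)
  thus ?thesis by simp
qed

lemma lipschitz_on_vec_mult_affine:
  fixes a :: "real^'n" and A :: "real^'n^'n"
  assumes "0 \<le> B"
  shows "(norm a + 2 * onorm ((*v) A) * B)-lipschitz_on (cball 0 B) (\<lambda>x. x * (a + A *v x))"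
proof (rule lipschitz_onI)
  define K where "K = onorm ((*v) A)"
  have K: "0 \<le> K" "\<And>z. norm (A *v z) \<le> K * norm z"
    unfolding K_def by (simp_all add: onorm_pos_le onorm)
  show "0 \<le> norm a + 2 * onorm ((*v) A) * B" using K(1) \<open>0 \<le> B\<close> by (simp add: K_def)
  fix x y :: "real^'n" assume "x \<in> cball 0 B" "y \<in> cball 0 B"
  hence x: "norm x \<le> B" and y: "norm y \<le> B" by simp_all
  have "x * (a + A *v x) - y * (a + A *v y) = (x - y) * (a + A *v x) + y * (A *v (x - y))"
    by (simp add: algebra_simps matrix_vector_mult_diff_distrib)
  hence "norm (x * (a + A *v x) - y * (a + A *v y))
      \<le> norm (x - y) * norm (a + A *v x) + norm y * norm (A *v (x - y))"
    by (metis norm_triangle_le add_mono norm_vec_mult_le)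
  also have "\<dots> \<le> norm (x - y) * (norm a + K * B) + B * (K * norm (x - y))"
  proof (intro add_mono mult_mono)
    show "norm (a + A *v x) \<le> norm a + K * B"
      using norm_triangle_ineq[of a "A *v x"] K(2)[of x] mult_left_mono[OF x K(1)] by linarith
  qed (use K y \<open>0 \<le> B\<close> in auto)
  finally show "dist (x * (a + A *v x)) (y * (a + A *v y)) \<le> (norm a + 2 * onorm ((*v) A) * B) * dist x y"
    by (simp add: dist_norm K_def algebra_simps)
qed

locale switched_two_prey_predator =
  fixes r d b1 b2 :: real and c1 c2 e1 e2 :: "nat \<Rightarrow> real"
  assumes r_pos: "r > 0" and d_pos: "d > 0" and b1_pos: "b1 > 0" and b2_pos: "b2 > 0"
    and coeffs_pos: "\<forall>j\<in>Sset. c1 j > 0 \<and> c2 j > 0 \<and> e1 j > 0 \<and> e2 j > 0"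
begin

abbreviation F :: "nat \<Rightarrow> real^3 \<Rightarrow> real^3" where
  "F \<equiv> field r d b1 b2 c1 c2 e1 e2"

definition growth_rates :: "nat \<Rightarrow> real^3 \<Rightarrow> real^3" where
  "growth_rates j x = vector [f1 r b1 c1 x j, f2 r b2 c2 x j, f3 d e1 e2 x j]"

definition intrinsic_rates :: "real^3" where
  "intrinsic_rates = vector [r, r, - d]"

definition interaction :: "nat \<Rightarrow> real^3^3" where
  "interaction j = vector [vector [- 1, - b1, - c1 j], vector [- b2, - 1, - c2 j], vector [e1 j, e2 j, 0]]"

lemma field_eq_mult: "F j x = x * growth_rates j x"
  by (simp add: vec_eq_iff forall_3 field_def growth_rates_def)

lemma growth_rates_affine: "growth_rates j x = intrinsic_rates + interaction j *v x"
  by (simp add: vec_eq_iff forall_3 growth_rates_def intrinsic_rates_def interaction_def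
      matrix_vector_mult_def sum_3 f1_def f2_def f3_def)

definition growth_const :: "real \<Rightarrow> real" where
  "growth_const B = (\<Sum>j\<in>Sset. norm intrinsic_rates + 2 * onorm ((*v) (interaction j)) * B)"

lemma growth_const_ge:
  assumes "j \<in> Sset" "0 \<le> B"
  shows "norm intrinsic_rates + 2 * onorm ((*v) (interaction j)) * B \<le> growth_const B"
proof -
  have "0 \<le> norm intrinsic_rates + 2 * onorm ((*v) (interaction k)) * B" for k
    using \<open>0 \<le> B\<close> by (simp add: onorm_pos_le)
  thus ?thesis unfolding growth_const_def by (intro member_le_sum) (use assms in \<open>auto simp: Sset_def\<close>)
qed

lemma lipschitz_on_field:
  assumes "j \<in> Sset" "0 \<le> B"
  shows "(growth_const B)-lipschitz_on (cball 0 B) (F j)"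
  unfolding field_eq_mult growth_rates_affine
  by (rule lipschitz_on_le[OF lipschitz_on_vec_mult_affine[OF \<open>0 \<le> B\<close>] growth_const_ge[OF assms]])

lemma norm_growth_rates_le:
  assumes "j \<in> Sset" "norm x \<le> B"
  shows "norm (growth_rates j x) \<le> growth_const B"
proof -
  define K where "K = onorm ((*v) (interaction j))"
  have "0 \<le> K" by (simp add: K_def onorm_pos_le)
  have "0 \<le> B" using assms(2) norm_ge_zero order_trans by blast
  have "norm (growth_rates j x) \<le> norm intrinsic_rates + norm (interaction j *v x)"
    unfolding growth_rates_affine by (rule norm_triangle_ineq)
  also have "norm (interaction j *v x) \<le> K * norm x" by (simp add: K_def onorm)
  also have "\<dots> \<le> K * B" using assms(2) \<open>0 \<le> K\<close> by (rule mult_left_mono)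
  also have "\<dots> \<le> 2 * K * B" using \<open>0 \<le> K\<close> \<open>0 \<le> B\<close> by simp
  also have "norm intrinsic_rates + 2 * K * B \<le> growth_const B"
    unfolding K_def by (rule growth_const_ge[OF assms(1) \<open>0 \<le> B\<close>])
  finally show ?thesis by simp
qed

lemma solution_on_orthant:
  assumes sw: "switching_path \<sigma>" and X: "solution_on F \<sigma> X T" and t: "0 \<le> t" "t \<le> T"
  shows solution_on_orthant_closed: "X 0 \<in> orthant \<Longrightarrow> X t \<in> orthant"
    and solution_on_orthant_open: "X 0 \<in> orthant_int \<Longrightarrow> X t \<in> orthant_int"
proof -
  have Sv: "\<sigma> s \<in> Sset" for s using sw by (simp add: switching_path_def)
  obtain B where B: "\<forall>s\<in>{0..T}. norm (X s) \<le> B"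
    using continuous_on_Icc_bound X unfolding solution_on_def by blast
  define g where "g i s = growth_rates (\<sigma> s) (X s) $ i" for i s
  have cont: "continuous_on {0..T} (\<lambda>s. X s $ i)" for i
    using X unfolding solution_on_def by (simp add: continuous_on_component)
  have deriv: "((\<lambda>s. X s $ i) has_real_derivative X s $ i * g i s) (at_right s)"
    if "0 \<le> s" "s < T" for i s
  proof -
    have "(X has_vector_derivative F (\<sigma> s) (X s)) (at_right s)"
      using X that unfolding solution_on_def by simp
    from bounded_linear.has_vector_derivative[OF bounded_linear_vec_nth this, of i]
    show ?thesis by (simp add: has_real_derivative_iff_has_vector_derivative field_eq_mult g_def)
  qed
  have bound: "\<bar>g i s\<bar> \<le> growth_const B" if "0 \<le> s" "s < T" for i s
    using component_le_norm_cart norm_growth_rates_le[OF Sv] B that unfolding g_def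
    by (meson atLeastAtMost_iff less_imp_le order_trans)
  note zero = rate_equation_zero[OF cont deriv bound t]
    and pos = rate_equation_pos[OF cont deriv bound t]
  show "X t \<in> orthant" if "X 0 \<in> orthant"
  proof -
    have "0 \<le> X t $ i" for i
    proof (cases "X 0 $ i = 0")
      case True
      thus ?thesis using zero[of i] by simp
    next
      case False
      hence "X 0 $ i > 0" using that by (simp add: orthant_def order.not_eq_order_implies_strict)
      thus ?thesis using pos[of i] by simp
    qed
    thus ?thesis by (simp add: orthant_def)
  qed
  show "X 0 \<in> orthant_int \<Longrightarrow> X t \<in> orthant_int" using pos by (simp add: orthant_int_def)
qed

definition w1 :: real where "w1 = (\<Sum>j\<in>Sset. e1 j / c1 j)"
definition w2 :: real where "w2 = (\<Sum>j\<in>Sset. e2 j / c2 j)"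

definition lyapunov :: "real^3 \<Rightarrow> real" where
  "lyapunov x = w1 * x$1 + w2 * x$2 + x$3"

definition lyapunov_level :: real where
  "lyapunov_level = (w1 + w2) * (r + d)^2 / (4 * d)"

lemma weights_pos: "w1 > 0" "w2 > 0"
proof -
  have "0 < e1 j / c1 j" "0 < e2 j / c2 j" if "j \<in> Sset" for j
    using coeffs_pos that by simp_all
  thus "w1 > 0" "w2 > 0" unfolding w1_def w2_def by (intro sum_pos; simp add: Sset_def)+
qed

lemma weights_dominate:
  assumes "j \<in> Sset"
  shows "e1 j \<le> w1 * c1 j" "e2 j \<le> w2 * c2 j"
proof -
  have nonneg: "0 \<le> e1 k / c1 k" "0 \<le> e2 k / c2 k" if "k \<in> Sset" for k
    using coeffs_pos that by (simp_all add: zero_le_divide_iff less_imp_le)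
  have "e1 j / c1 j \<le> w1" "e2 j / c2 j \<le> w2"
    unfolding w1_def w2_def by (rule member_le_sum[OF assms]; simp add: nonneg Sset_def)+
  moreover have "c1 j > 0" "c2 j > 0" using assms coeffs_pos by simp_all
  ultimately show "e1 j \<le> w1 * c1 j" "e2 j \<le> w2 * c2 j" by (simp_all add: divide_le_eq)
qed

lemma lyapunov_level_nonneg: "0 \<le> lyapunov_level"
  using weights_pos d_pos by (simp add: lyapunov_level_def)

lemma lyapunov_nonneg: "x \<in> orthant \<Longrightarrow> 0 \<le> lyapunov x"
  using weights_pos by (simp add: lyapunov_def orthant_def)

lemma norm_le_lyapunov:
  assumes "x \<in> orthant"
  shows "norm x \<le> (1 / w1 + 1 / w2 + 1) * lyapunov x"
proof -
  have x: "0 \<le> x$1" "0 \<le> x$2" "0 \<le> x$3" using assms by (simp_all add: orthant_def)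
  have "norm x \<le> x$1 + x$2 + x$3" using norm_le_l1_cart[of x] x by (simp add: sum_3)
  also have "x$1 \<le> lyapunov x / w1" "x$2 \<le> lyapunov x / w2" "x$3 \<le> lyapunov x"
    using x weights_pos by (simp_all add: lyapunov_def field_simps)
  hence "x$1 + x$2 + x$3 \<le> (1 / w1 + 1 / w2 + 1) * lyapunov x" by (simp add: algebra_simps)
  finally show ?thesis .
qed

\<comment> \<open>The weights cancel the predation terms, and \<open>w x (r + d - x) \<le> w (r + d)\<^sup>2 / 4\<close>.\<close>
lemma lyapunov_dissipation:
  assumes x: "x \<in> orthant" and j: "j \<in> Sset"
  shows "w1 * F j x $ 1 + w2 * F j x $ 2 + F j x $ 3 \<le> d * lyapunov_level - d * lyapunov x"
proof -
  have u: "0 \<le> x$1" "0 \<le> x$2" "0 \<le> x$3" using x by (simp_all add: orthant_def)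
  have "w1 * F j x $ 1 + w2 * F j x $ 2 + F j x $ 3 + d * lyapunov x =
      w1 * (x$1 * (r + d - x$1)) + w2 * (x$2 * (r + d - x$2)) - (w1 * b1 + w2 * b2) * (x$1 * x$2)
      + (x$1 * x$3) * (e1 j - w1 * c1 j) + (x$2 * x$3) * (e2 j - w2 * c2 j)"
    by (simp add: field_def f1_def f2_def f3_def lyapunov_def algebra_simps)
  moreover have quad: "y * (r + d - y) \<le> (r + d)^2 / 4" for y :: real
    using zero_le_square[of "y - (r + d) / 2"] by (simp add: power2_eq_square field_simps)
  have "w1 * (x$1 * (r + d - x$1)) \<le> w1 * ((r + d)^2 / 4)"
    "w2 * (x$2 * (r + d - x$2)) \<le> w2 * ((r + d)^2 / 4)"
    using weights_pos by (intro mult_left_mono quad; simp)+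
  moreover have "0 \<le> (w1 * b1 + w2 * b2) * (x$1 * x$2)" using weights_pos b1_pos b2_pos u by simp
  moreover have "(x$1 * x$3) * (e1 j - w1 * c1 j) \<le> 0" "(x$2 * x$3) * (e2 j - w2 * c2 j) \<le> 0"
    using weights_dominate[OF j] u by (simp_all add: mult_nonneg_nonpos)
  moreover have "d * lyapunov_level = w1 * ((r + d)^2 / 4) + w2 * ((r + d)^2 / 4)"
    using d_pos by (simp add: lyapunov_level_def field_simps)
  ultimately show ?thesis by linarith
qed

lemma lyapunov_decay:
  assumes sw: "switching_path \<sigma>" and X: "solution_on F \<sigma> X T" and X0: "X 0 \<in> orthant"
    and t: "0 \<le> t" "t \<le> T"
  shows "lyapunov (X t) - lyapunov_level \<le> (lyapunov (X 0) - lyapunov_level) * exp (- d * t)"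
proof -
  have Sv: "\<sigma> s \<in> Sset" for s using sw by (simp add: switching_path_def)
  define V' where "V' s = w1 * F (\<sigma> s) (X s) $ 1 + w2 * F (\<sigma> s) (X s) $ 2 + F (\<sigma> s) (X s) $ 3" for s
  have "lyapunov (X t) - lyapunov_level \<le> (lyapunov (X 0) - lyapunov_level) * exp (- d * (t - 0))"
  proof (rule right_DERIV_gronwall[where \<phi> = "\<lambda>s. lyapunov (X s) - lyapunov_level", OF t(1)])
    have "continuous_on {0..t} X" using X t unfolding solution_on_def by (auto intro: continuous_on_subset)
    thus "continuous_on {0..t} (\<lambda>s. lyapunov (X s) - lyapunov_level)"
      unfolding lyapunov_def by (intro continuous_intros)
  next
    fix s assume s: "0 \<le> s" "s < t"
    have "(X has_vector_derivative F (\<sigma> s) (X s)) (at_right s)"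
      using X s t unfolding solution_on_def by simp
    hence d: "((\<lambda>s. X s $ i) has_real_derivative F (\<sigma> s) (X s) $ i) (at_right s)" for i
      using bounded_linear.has_vector_derivative[OF bounded_linear_vec_nth]
      by (simp add: has_real_derivative_iff_has_vector_derivative)
    show "((\<lambda>s. lyapunov (X s) - lyapunov_level) has_real_derivative V' s) (at_right s)"
      unfolding lyapunov_def V'_def by (rule derivative_eq_intros d refl | simp)+
    have "X s \<in> orthant" using solution_on_orthant_closed[OF sw X _ _ X0] s t by simp
    from lyapunov_dissipation[OF this Sv]
    show "V' s \<le> - d * (lyapunov (X s) - lyapunov_level)" by (simp add: V'_def algebra_simps)
  qed
  thus ?thesis by simp
qed

lemma lyapunov_le_max:
  assumes "switching_path \<sigma>" "solution_on F \<sigma> X T" "X 0 \<in> orthant" "0 \<le> t" "t \<le> T"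
  shows "lyapunov (X t) \<le> max (lyapunov (X 0)) lyapunov_level"
proof -
  define E where "E = exp (- d * t)"
  have "0 \<le> E" "E \<le> 1" using d_pos \<open>0 \<le> t\<close> by (simp_all add: E_def)
  have "(lyapunov (X 0) - lyapunov_level) * E \<le> max 0 (lyapunov (X 0) - lyapunov_level)"
  proof (cases "lyapunov (X 0) \<le> lyapunov_level")
    case True
    thus ?thesis using \<open>0 \<le> E\<close> by (simp add: mult_nonpos_nonneg)
  next
    case False
    thus ?thesis using \<open>E \<le> 1\<close> by (simp add: mult_left_le)
  qed
  thus ?thesis using lyapunov_decay[OF assms] by (simp add: E_def)
qed

lemma field_locally_lipschitz:
  assumes "switching_path \<sigma>" "0 \<le> B"
  shows "\<exists>L. \<forall>t. L-lipschitz_on (cball 0 B) (F (\<sigma> t))"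
  using assms lipschitz_on_field by (auto simp: switching_path_def)

lemma solution_on_exists:
  assumes sw: "switching_path \<sigma>" and x0: "x0 \<in> orthant" and "0 \<le> T"
  obtains X where "solution_on F \<sigma> X T" "X 0 = x0"
proof -
  define R where "R = (1 / w1 + 1 / w2 + 1) * max (lyapunov x0) lyapunov_level"
  define B where "B = R + 1"
  have "0 \<le> R" using weights_pos lyapunov_nonneg[OF x0] by (simp add: R_def)
  hence "0 \<le> B" by (simp add: B_def)
  have in_ball: "Y t \<in> ball 0 B" if "solution_on F \<sigma> Y t" "Y 0 = x0" "0 \<le> t" for Y t
  proof -
    have "Y t \<in> orthant" using solution_on_orthant_closed[OF sw that(1) _ order_refl] that(2,3) x0 by simp
    hence "norm (Y t) \<le> (1 / w1 + 1 / w2 + 1) * lyapunov (Y t)" by (rule norm_le_lyapunov)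
    also have "\<dots> \<le> R"
    proof -
      have "lyapunov (Y t) \<le> max (lyapunov x0) lyapunov_level"
        using lyapunov_le_max[OF sw that(1) _ that(3) order_refl] that(2) x0 by simp
      thus ?thesis unfolding R_def using weights_pos by (intro mult_left_mono) auto
    qed
    finally show ?thesis by (simp add: B_def)
  qed
  \<comment> \<open>Truncated at the ball the field is globally Lipschitz, and by the a priori bound the
    truncated solution never leaves the ball.\<close>
  define G where "G j x = F j (closest_point (cball 0 B) x)" for j x
  have "(growth_const B)-lipschitz_on UNIV (G j)" if "j \<in> Sset" for j
  proof -
    have "1-lipschitz_on UNIV (closest_point (cball 0 B))"
      using closest_point_lipschitz[of "cball 0 B"] \<open>0 \<le> B\<close> by (intro lipschitz_onI) auto
    moreover have "(growth_const B)-lipschitz_on (closest_point (cball 0 B) ` UNIV) (F j)"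
      using closest_point_in_set[of "cball 0 B"] \<open>0 \<le> B\<close>
      by (intro lipschitz_on_subset[OF lipschitz_on_field[OF that \<open>0 \<le> B\<close>]]) auto
    ultimately show ?thesis unfolding G_def using lipschitz_on_compose2 by fastforce
  qed
  then obtain Y where Y: "solution_on G \<sigma> Y T" "Y 0 = x0"
    using solution_on_exists_lipschitz[OF sw \<open>0 \<le> T\<close>] by blast
  have "solution_on F \<sigma> Y T"
  proof (rule solution_on_of_stays_in[OF Y(1) open_ball])
    show "G j x = F j x" if "x \<in> ball 0 B" for j x
      using that by (simp add: G_def closest_point_self)
    show "Y t \<in> ball 0 B" if "0 \<le> t" "t \<le> T" "solution_on F \<sigma> Y t" for t
      using in_ball that Y(2) by blast
  qed
  from this Y(2) show ?thesis by (rule that)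
qed

lemma solves_iff_solution_on: "solves r d b1 b2 c1 c2 e1 e2 \<sigma> X \<longleftrightarrow> (\<forall>T. solution_on F \<sigma> X T)"
  unfolding solves_def by (rule solution_on_all_iff)

lemma solves_exists_unique:
  assumes sw: "switching_path \<sigma>" and x0: "x0 \<in> orthant"
  shows "\<exists>X. X 0 = x0 \<and> solves r d b1 b2 c1 c2 e1 e2 \<sigma> X \<and>
           (\<forall>Y. Y 0 = x0 \<and> solves r d b1 b2 c1 c2 e1 e2 \<sigma> Y \<longrightarrow> (\<forall>t\<ge>0. Y t = X t))"
proof -
  have unique: "X t = Y t"
    if "solution_on F \<sigma> X T" "solution_on F \<sigma> Y T" "X 0 = Y 0" "0 \<le> t" "t \<le> T" for X Y T t
    by (rule solution_on_unique[OF that(1-3) field_locally_lipschitz[OF sw] that(4-5)])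
  have "\<exists>X. solution_on F \<sigma> X (real n) \<and> X 0 = x0" for n :: nat
    by (rule solution_on_exists[OF sw x0, of "real n"]) auto
  then obtain Xs where Xs: "\<And>n. solution_on F \<sigma> (Xs n) (real n)" "\<And>n. Xs n 0 = x0"
    using choice[of "\<lambda>n X. solution_on F \<sigma> X (real n) \<and> X 0 = x0"] by blast
  have "Xs m t = Xs n t" if "0 \<le> t" "t \<le> real m" "t \<le> real n" for m n t
    by (rule unique[OF solution_on_mono[OF Xs(1) that(2)] solution_on_mono[OF Xs(1) that(3)]])
      (use Xs(2) that in auto)
  then obtain X where X: "\<And>T. solution_on F \<sigma> X T" "\<And>n t. 0 \<le> t \<Longrightarrow> t \<le> real n \<Longrightarrow> X t = Xs n t"
    using solution_on_glue[OF Xs(1)] by blast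
  have "X 0 = x0" using X(2)[of 0 0] Xs(2) by simp
  moreover have "Y t = X t" if "Y 0 = x0" "solves r d b1 b2 c1 c2 e1 e2 \<sigma> Y" "0 \<le> t" for Y t
    by (rule unique[of _ t]) (use that X(1) \<open>X 0 = x0\<close> in \<open>auto simp: solves_iff_solution_on\<close>)
  ultimately show ?thesis using X(1) by (auto simp: solves_iff_solution_on)
qed

lemma compact_lyapunov_sublevel: "compact {x \<in> orthant. lyapunov x \<le> c}"
proof -
  have "closed orthant" unfolding orthant_def by (intro closed_Collect_all closed_Collect_le continuous_intros)
  moreover have "{x \<in> orthant. lyapunov x \<le> c} = orthant \<inter> {x. lyapunov x \<le> c}" by auto
  ultimately have "closed {x \<in> orthant. lyapunov x \<le> c}" unfolding lyapunov_def
    by (simp add: closed_Int closed_Collect_le continuous_on_add continuous_on_mult_left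
        continuous_on_component continuous_on_id)
  moreover have "norm x \<le> (1 / w1 + 1 / w2 + 1) * c" if "x \<in> orthant" "lyapunov x \<le> c" for x
  proof -
    have "norm x \<le> (1 / w1 + 1 / w2 + 1) * lyapunov x" using that(1) by (rule norm_le_lyapunov)
    also have "\<dots> \<le> (1 / w1 + 1 / w2 + 1) * c" using that(2) weights_pos by (intro mult_left_mono) simp_all
    finally show ?thesis .
  qed
  hence "bounded {x \<in> orthant. lyapunov x \<le> c}" unfolding bounded_iff by blast
  ultimately show ?thesis by (simp add: compact_eq_bounded_closed)
qed

lemma lyapunov_eventually_le:
  assumes sw: "switching_path \<sigma>" and X: "solution_on F \<sigma> X t" and X0: "X 0 \<in> orthant"
    and t: "lyapunov (X 0) \<le> d * t"
  shows "lyapunov (X t) \<le> lyapunov_level + 1"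
proof -
  define V0 where "V0 = lyapunov (X 0)"
  have "0 \<le> V0" using lyapunov_nonneg[OF X0] by (simp add: V0_def)
  hence "0 \<le> d * t" using t by (simp add: V0_def)
  hence "0 \<le> t" using d_pos by (simp add: zero_le_mult_iff)
  have "(V0 - lyapunov_level) * exp (- d * t) \<le> V0 * exp (- d * t)"
    using lyapunov_level_nonneg by (simp add: mult_right_mono)
  also have "\<dots> = V0 / exp (d * t)" by (simp add: exp_minus field_simps)
  also have "\<dots> \<le> V0 / (1 + d * t)"
    using exp_ge_add_one_self[of "d * t"] \<open>0 \<le> V0\<close> \<open>0 \<le> d * t\<close>
    by (intro divide_left_mono) (auto intro!: mult_pos_pos add_pos_nonneg)
  also have "\<dots> \<le> 1"
    using t \<open>0 \<le> d * t\<close> by (subst divide_le_eq_1) (auto simp: V0_def)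
  finally show ?thesis
    using lyapunov_decay[OF sw X X0 \<open>0 \<le> t\<close> order_refl] by (simp add: V0_def)
qed

lemma absorbing_compact_set:
  "\<exists>K. compact K \<and> K \<subseteq> orthant \<and>
     (\<forall>\<sigma> X. switching_path \<sigma> \<and> X 0 \<in> orthant \<and> solves r d b1 b2 c1 c2 e1 e2 \<sigma> X \<longrightarrow>
        (\<exists>T\<ge>0. \<forall>t\<ge>T. X t \<in> K))"
proof -
  define K where "K = {x \<in> orthant. lyapunov x \<le> lyapunov_level + 1}"
  have "\<exists>T\<ge>0. \<forall>t\<ge>T. X t \<in> K"
    if sw: "switching_path \<sigma>" and X0: "X 0 \<in> orthant" and "solves r d b1 b2 c1 c2 e1 e2 \<sigma> X" for \<sigma> X
  proof (intro exI[of _ "lyapunov (X 0) / d"] conjI allI impI)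
    have X: "\<And>T. solution_on F \<sigma> X T" using that by (simp add: solves_iff_solution_on)
    show "0 \<le> lyapunov (X 0) / d" using lyapunov_nonneg[OF X0] d_pos by simp
    fix t assume "lyapunov (X 0) / d \<le> t"
    moreover from this have "0 \<le> t"
      using lyapunov_nonneg[OF X0] d_pos by (meson divide_nonneg_pos order_trans)
    ultimately have "lyapunov (X 0) \<le> d * t" "0 \<le> t" using d_pos by (simp_all add: field_simps)
    thus "X t \<in> K"
      using lyapunov_eventually_le[OF sw X X0] solution_on_orthant_closed[OF sw X _ order_refl X0]
      by (simp add: K_def)
  qed
  moreover have "compact K" unfolding K_def by (rule compact_lyapunov_sublevel)
  moreover have "K \<subseteq> orthant" by (auto simp: K_def)
  ultimately show ?thesis by blast
qed

lemma solves_orthant_int: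
  assumes "switching_path \<sigma>" "X 0 \<in> orthant_int" "solves r d b1 b2 c1 c2 e1 e2 \<sigma> X" "0 \<le> t"
  shows "X t \<in> orthant_int"
  using assms solution_on_orthant_open[OF assms(1) _ assms(4) order_refl]
  by (simp add: solves_iff_solution_on)

end

theorem theorem2p1:
  fixes r d b1 b2 :: real and c1 c2 e1 e2 :: "nat \<Rightarrow> real"
  assumes "r > 0" "d > 0" "b1 > 0" "b2 > 0"
    and "\<forall>j\<in>Sset. c1 j > 0 \<and> c2 j > 0 \<and> e1 j > 0 \<and> e2 j > 0"
  shows "(\<forall>\<sigma> x0. switching_path \<sigma> \<longrightarrow> x0 \<in> orthant \<longrightarrow>
            (\<exists>X. X 0 = x0 \<and> solves r d b1 b2 c1 c2 e1 e2 \<sigma> X \<and>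
                 (\<forall>Y. Y 0 = x0 \<and> solves r d b1 b2 c1 c2 e1 e2 \<sigma> Y \<longrightarrow> (\<forall>t\<ge>0. Y t = X t))))
       \<and> (\<exists>K. compact K \<and> K \<subseteq> orthant \<and>
            (\<forall>\<sigma> X. switching_path \<sigma> \<and> X 0 \<in> orthant \<and> solves r d b1 b2 c1 c2 e1 e2 \<sigma> X \<longrightarrow>
               (\<exists>T\<ge>0. \<forall>t\<ge>T. X t \<in> K)))
       \<and> (\<forall>\<sigma> X. switching_path \<sigma> \<and> X 0 \<in> orthant_int \<and> solves r d b1 b2 c1 c2 e1 e2 \<sigma> X \<longrightarrow>
            (\<forall>t\<ge>0. X t \<in> orthant_int))"
proof -
  interpret switched_two_prey_predator r d b1 b2 c1 c2 e1 e2
    using assms by unfold_locales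
  show ?thesis using solves_exists_unique absorbing_compact_set solves_orthant_int by blast
qed

end
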